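(* Let $(\mathfrak g,[\cdot,\cdot],\delta,n)$ be an almost NL bialgebra in which $n$ is a Nijenhuis operator, and assume ${}^tn$ is $\mathrm{ad}^*$-equivariant on $(\mathfrak g^*,[\cdot,\cdot]_{\mathfrak g^*})$, i.e. $\delta(\xi)(\eta_1,{}^tn\eta_2)=\delta(n\xi)(\eta_1,\eta_2)$ for all $\xi\in\mathfrak g$, $\eta_1,\eta_2\in\mathfrak g^*$. Then for all integers $i,j\ge0$: $[\cdot,\cdot]_{n^i}$ is a Lie bracket on $\mathfrak g$; $[\cdot,\cdot]^{({}^tn)^j}$ is a Lie bracket on $\mathfrak g^*$ with $\langle[\eta_1,\eta_2]^{({}^tn)^j},\xi\rangle=\delta_{({}^tn)^j}(\xi)(\eta_1,\eta_2)$; and $\delta_{({}^tn)^j}$ is a 1-cocycle for $[\cdot,\cdot]_{n^i}$. Thus $(\mathfrak g,[\cdot,\cdot]_{n^i},\delta^{n^i}_{({}^tn)^j})$, where $\delta^{n^i}_{({}^tn)^j}$ denotes $\delta_{({}^tn)^j}$ regarded as a cochain for $[\cdot,\cdot]_{n^i}$, is a Lie bialgebra for all $i,j\ge0$; moreover the brackets $[\cdot,\cdot]_{n^i}$ ($i\ge0$) are pairwise compatible, as are the brackets $[\cdot,\cdot]^{({}^tn)^j}$ ($j\ge0$) (any linear combination of two of them is again a Lie bracket).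
   Context: $(\mathfrak g,[\cdot,\cdot])$ is a finite-dimensional real Lie algebra; $\langle\mathrm{ad}^*_\xi\eta,\zeta\rangle=-\langle\eta,[\xi,\zeta]\rangle$. Elements of $\wedge^2\mathfrak g$ are skew-symmetric bilinear forms on $\mathfrak g^*$; for linear $\phi:\mathfrak g^*\to\mathfrak g^*$, $(\iota_\phi P)(\eta_1,\eta_2)=P(\phi\eta_1,\eta_2)+P(\eta_1,\phi\eta_2)$; $\mathrm{ad}^{(2)}_\xi=\iota_{\mathrm{ad}^*_\xi}$. A linear $\delta:\mathfrak g\to\wedge^2\mathfrak g$ is a 1-cocycle for $[\cdot,\cdot]$ if $\mathrm{ad}^{(2)}_{\xi_1}\delta(\xi_2)-\mathrm{ad}^{(2)}_{\xi_2}\delta(\xi_1)-\delta([\xi_1,\xi_2])=0$; a Lie bialgebra $(\mathfrak g,[\cdot,\cdot],\delta)$ has such $\delta$ with dual bracket $\langle[\eta_1,\eta_2]_{\mathfrak g^*},\xi\rangle=\delta(\xi)(\eta_1,\eta_2)$ a Lie bracket. ${}^tn$ is the transpose of $n$. For $m:\mathfrak g\to\mathfrak g$ linear, $[\xi_1,\xi_2]_m=[m\xi_1,\xi_2]+[\xi_1,m\xi_2]-m[\xi_1,\xi_2]$ (so $[\cdot,\cdot]_{n^0}=[\cdot,\cdot]$); $m$ is Nijenhuis if $m[\xi_1,\xi_2]_m=[m\xi_1,m\xi_2]$. For $j\ge0$, $[\eta_1,\eta_2]^{({}^tn)^j}=[({}^tn)^j\eta_1,\eta_2]_{\mathfrak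 g^*}+[\eta_1,({}^tn)^j\eta_2]_{\mathfrak g^*}-({}^tn)^j[\eta_1,\eta_2]_{\mathfrak g^*}$ and $\delta_{({}^tn)^j}(\xi)=\iota_{({}^tn)^j}\delta(\xi)-\delta(n^j\xi)$. A 1-cocycle for $[\cdot,\cdot]_{n^i}$ is a linear $\delta'$ with $\iota_{A^i_{\xi_1}}\delta'(\xi_2)-\iota_{A^i_{\xi_2}}\delta'(\xi_1)-\delta'([\xi_1,\xi_2]_{n^i})=0$, where $A^i_\xi=[({}^tn)^i,\mathrm{ad}^*_\xi]+\mathrm{ad}^*_{n^i\xi}$. An almost NL bialgebra $(\mathfrak g,[\cdot,\cdot],\delta,n)$ is a Lie bialgebra with linear $n$ such that $[\cdot,\cdot]_n$ is a Lie bracket, $\delta$ is a 1-cocycle for $[\cdot,\cdot]_n$, and $[\cdot,\cdot]^{{}^tn}$ is a Lie bracket on $\mathfrak g^*$. *)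

theory Defs
  imports "HOL-Analysis.Analysis"
begin

text \<open>Model: the finite-dimensional real vector space g is a type 'a::euclidean_space;
  its dual g* is identified with 'a via the inner product, the pairing
  being eta \<bullet> xi.  The transpose of a linear map n is adjoint n.
  Elements of wedge^2 g are skew-symmetric bilinear forms on g*, i.e.
  functions 'a \<Rightarrow> 'a \<Rightarrow> real.\<close>

definition lie_bracket :: "('a::real_vector \<Rightarrow> 'a \<Rightarrow> 'a) \<Rightarrow> bool" where
  "lie_bracket B \<longleftrightarrow> bilinear B \<and> (\<forall>x y. B x y = - B y x) \<and>
     (\<forall>x y z. B x (B y z) + B y (B z x) + B z (B x y) = 0)"

definition wedge2 :: "('a::real_vector \<Rightarrow> 'a \<Rightarrow> real) \<Rightarrow> bool" where
  "wedge2 P \<longleftrightarrow> bilinear P \<and> (\<forall>x y. P x y = - P y x)"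

text \<open>Coadjoint action: (coad B xi eta) \<bullet> zeta = - eta \<bullet> B xi zeta.\<close>
definition coad :: "('a::real_inner \<Rightarrow> 'a \<Rightarrow> 'a) \<Rightarrow> 'a \<Rightarrow> 'a \<Rightarrow> 'a" where
  "coad B xi = (\<lambda>eta. - adjoint (B xi) eta)"

definition iota :: "('a \<Rightarrow> 'a) \<Rightarrow> ('a \<Rightarrow> 'a \<Rightarrow> real) \<Rightarrow> 'a \<Rightarrow> 'a \<Rightarrow> real" where
  "iota phi P = (\<lambda>eta1 eta2. P (phi eta1) eta2 + P eta1 (phi eta2))"

text \<open>1-cocycle for the bracket B (with ad^(2)_xi = iota (coad B xi)).\<close>
definition cocycle :: "('a::real_inner \<Rightarrow> 'a \<Rightarrow> 'a) \<Rightarrow> ('a \<Rightarrow> 'a \<Rightarrow> 'a \<Rightarrow> real) \<Rightarrow> bool" where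
  "cocycle B d \<longleftrightarrow> (\<forall>xi1 xi2 eta1 eta2.
     iota (coad B xi1) (d xi2) eta1 eta2 - iota (coad B xi2) (d xi1) eta1 eta2
       - d (B xi1 xi2) eta1 eta2 = 0)"

text \<open>Dual bracket: (dual_br d eta1 eta2) \<bullet> xi = d xi eta1 eta2 (for d linear in xi).\<close>
definition dual_br :: "('a::euclidean_space \<Rightarrow> 'a \<Rightarrow> 'a \<Rightarrow> real) \<Rightarrow> 'a \<Rightarrow> 'a \<Rightarrow> 'a" where
  "dual_br d eta1 eta2 = (\<Sum>b\<in>Basis. d b eta1 eta2 *\<^sub>R b)"

definition lie_bialgebra :: "('a::euclidean_space \<Rightarrow> 'a \<Rightarrow> 'a) \<Rightarrow> ('a \<Rightarrow> 'a \<Rightarrow> 'a \<Rightarrow> real) \<Rightarrow> bool" where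
  "lie_bialgebra B d \<longleftrightarrow> lie_bracket B \<and> (\<forall>eta1 eta2. linear (\<lambda>xi. d xi eta1 eta2)) \<and>
     (\<forall>xi. wedge2 (d xi)) \<and> cocycle B d \<and> lie_bracket (dual_br d)"

text \<open>Deformed bracket [x,y]_m = [m x, y] + [x, m y] - m [x,y]
  (used both on g and, with the dual bracket, on g*).\<close>
definition br_m :: "('a::real_vector \<Rightarrow> 'a \<Rightarrow> 'a) \<Rightarrow> ('a \<Rightarrow> 'a) \<Rightarrow> 'a \<Rightarrow> 'a \<Rightarrow> 'a" where
  "br_m B m x y = B (m x) y + B x (m y) - m (B x y)"

definition nijenhuis :: "('a::real_vector \<Rightarrow> 'a \<Rightarrow> 'a) \<Rightarrow> ('a \<Rightarrow> 'a) \<Rightarrow> bool" where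
  "nijenhuis B m \<longleftrightarrow> (\<forall>x y. m (br_m B m x y) = B (m x) (m y))"

text \<open>delta_phi(xi) = iota phi (delta xi) - delta (m xi), with phi = (tn)^j, m = n^j.\<close>
definition delta_tw :: "('a \<Rightarrow> 'a \<Rightarrow> 'a \<Rightarrow> real) \<Rightarrow> ('a \<Rightarrow> 'a) \<Rightarrow> ('a \<Rightarrow> 'a) \<Rightarrow> 'a \<Rightarrow> 'a \<Rightarrow> 'a \<Rightarrow> real" where
  "delta_tw d phi m xi = (\<lambda>eta1 eta2. iota phi (d xi) eta1 eta2 - d (m xi) eta1 eta2)"

text \<open>A_xi = [t m, ad*_xi] + ad*_(m xi), with m = n^i and t m = (tn)^i.\<close>
definition A_op :: "('a::real_inner \<Rightarrow> 'a \<Rightarrow> 'a) \<Rightarrow> ('a \<Rightarrow> 'a) \<Rightarrow> ('a \<Rightarrow> 'a) \<Rightarrow> 'a \<Rightarrow> 'a \<Rightarrow> 'a" where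
  "A_op B m tm xi = (\<lambda>eta. tm (coad B xi eta) - coad B xi (tm eta) + coad B (m xi) eta)"

text \<open>1-cocycle for [.,.]_m (m = n^i, tm = (tn)^i).\<close>
definition cocycle_m :: "('a::real_inner \<Rightarrow> 'a \<Rightarrow> 'a) \<Rightarrow> ('a \<Rightarrow> 'a) \<Rightarrow> ('a \<Rightarrow> 'a) \<Rightarrow> ('a \<Rightarrow> 'a \<Rightarrow> 'a \<Rightarrow> real) \<Rightarrow> bool" where
  "cocycle_m B m tm d \<longleftrightarrow> (\<forall>xi1 xi2 eta1 eta2.
     iota (A_op B m tm xi1) (d xi2) eta1 eta2 - iota (A_op B m tm xi2) (d xi1) eta1 eta2
       - d (br_m B m xi1 xi2) eta1 eta2 = 0)"

definition almost_NL_bialgebra :: "('a::euclidean_space \<Rightarrow> 'a \<Rightarrow> 'a) \<Rightarrow> ('a \<Rightarrow> 'a \<Rightarrow> 'a \<Rightarrow> real) \<Rightarrow> ('a \<Rightarrow> 'a) \<Rightarrow> bool" where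
  "almost_NL_bialgebra B d n \<longleftrightarrow> lie_bialgebra B d \<and> linear n \<and> lie_bracket (br_m B n)
     \<and> cocycle_m B n (adjoint n) d \<and> lie_bracket (br_m (dual_br d) (adjoint n))"

end

theory Submission
  imports Defs
begin

text \<open>Since n is Nijenhuis, the deformed brackets satisfy ([-,-]_{n^i})_{n^k} = [-,-]_{n^(i+k)},
  and every a + b n^k is again Nijenhuis for [-,-]_{n^i}; as a Nijenhuis deformation of a Lie
  bracket is Lie, this gives all the brackets on g together with their compatibility.
  On g^*, equivariance makes tn an element of the centroid of the dual bracket, so
  [-,-]^{(tn)^j} is just (tn)^j composed with the dual bracket, which is the bracket dual to
  delta_{(tn)^j} = delta o n^j.  For the cocycle conditions, the defects of delta o M for mu and of
  delta for mu_M differ by defects of delta for mu; so if delta is a cocycle for mu and mu_M, then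
  delta o M is a cocycle for mu, and (via the vanishing of [tM, ad^*]-terms) delta is a cocycle
  for (mu_M)_M.  By induction delta is a cocycle for every [-,-]_{n^k}, and then delta o n^j is one
  for every [-,-]_{n^i}.\<close>

lemmas bilinear_simps = bilinear_ladd bilinear_radd bilinear_lsub bilinear_rsub bilinear_lmul
  bilinear_rmul bilinear_lneg bilinear_rneg bilinear_lzero bilinear_rzero

lemmas linear_simps = linear_add linear_diff linear_scale linear_neg linear_0

lemma linear_funpow:
  fixes f :: "'a::real_vector \<Rightarrow> 'a"
  assumes "linear f"
  shows "linear (f ^^ k)"
proof (induction k)
  case 0
  show ?case by (simp add: linear_iff)
next
  case (Suc k)
  show ?case using linear_compose[OF Suc.IH assms] by (simp add: comp_def)
qed

section \<open>Nijenhuis deformations of a bracket\<close>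

definition jacobiator :: "('a::real_vector \<Rightarrow> 'a \<Rightarrow> 'a) \<Rightarrow> 'a \<Rightarrow> 'a \<Rightarrow> 'a \<Rightarrow> 'a" where
  "jacobiator \<mu> x y z = \<mu> x (\<mu> y z) + \<mu> y (\<mu> z x) + \<mu> z (\<mu> x y)"

definition nijenhuis_concomitant ::
    "('a::real_vector \<Rightarrow> 'a \<Rightarrow> 'a) \<Rightarrow> ('a \<Rightarrow> 'a) \<Rightarrow> ('a \<Rightarrow> 'a) \<Rightarrow> 'a \<Rightarrow> 'a \<Rightarrow> 'a" where
  "nijenhuis_concomitant \<mu> A B x y =
     \<mu> (A x) (B y) + \<mu> (B x) (A y) - A (br_m \<mu> B x y) - B (br_m \<mu> A x y)"

lemma lie_bracket_iff_jacobiator: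
  "lie_bracket \<mu> \<longleftrightarrow>
     bilinear \<mu> \<and> (\<forall>x y. \<mu> x y = - \<mu> y x) \<and> (\<forall>x y z. jacobiator \<mu> x y z = 0)"
  unfolding lie_bracket_def jacobiator_def ..

lemma br_m_id [simp]: "br_m \<mu> id = \<mu>" "br_m \<mu> (\<lambda>x. x) = \<mu>"
  by (simp_all add: br_m_def fun_eq_iff)

lemma bilinear_br_m:
  assumes "bilinear \<mu>" "linear A"
  shows "bilinear (br_m \<mu> A)"
  using assms unfolding bilinear_def br_m_def
  by (auto intro!: linearI simp: linear_simps bilinear_simps[OF assms(1)] algebra_simps)

lemma nijenhuisD:
  assumes "linear N" "nijenhuis \<mu> N"
  shows "\<mu> (N x) (N y) = N (\<mu> (N x) y) + N (\<mu> x (N y)) - N (N (\<mu> x y))"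
  using assms by (simp add: nijenhuis_def br_m_def linear_simps)

lemma nijenhuis_iff_concomitant:
  "nijenhuis \<mu> N \<longleftrightarrow> (\<forall>x y. nijenhuis_concomitant \<mu> N N x y = 0)"
proof -
  have "nijenhuis_concomitant \<mu> N N x y = 2 *\<^sub>R (\<mu> (N x) (N y) - N (br_m \<mu> N x y))" for x y
    by (simp add: nijenhuis_concomitant_def scaleR_2 algebra_simps)
  then show ?thesis
    by (auto simp: nijenhuis_def)
qed

lemma nijenhuis_concomitant_commute:
  "nijenhuis_concomitant \<mu> A B x y = nijenhuis_concomitant \<mu> B A x y"
  by (simp add: nijenhuis_concomitant_def algebra_simps)

lemma br_m_br_m:
  assumes "bilinear \<mu>" "linear A" "linear B" "\<And>z. A (B z) = B (A z)"
  shows "br_m (br_m \<mu> A) B x y = br_m \<mu> (\<lambda>z. A (B z)) x y + nijenhuis_concomitant \<mu> A B x y"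
  using assms by (simp add: br_m_def nijenhuis_concomitant_def bilinear_simps linear_simps algebra_simps)

lemma jacobiator_br_m:
  assumes \<mu>: "bilinear \<mu>" and N: "linear N" and nij: "nijenhuis \<mu> N"
  shows "jacobiator (br_m \<mu> N) x y z =
      (jacobiator \<mu> (N x) (N y) z + jacobiator \<mu> (N y) (N z) x + jacobiator \<mu> (N z) (N x) y)
    - N ((jacobiator \<mu> (N x) y z + jacobiator \<mu> (N y) z x + jacobiator \<mu> (N z) x y)
         - N (jacobiator \<mu> x y z))"
  unfolding jacobiator_def br_m_def using \<mu> N
  by (simp only: bilinear_simps linear_simps nijenhuisD[OF N nij]) (simp add: algebra_simps)

lemma lie_bracket_br_m:
  assumes \<mu>: "lie_bracket \<mu>" and N: "linear N" and nij: "nijenhuis \<mu> N"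
  shows "lie_bracket (br_m \<mu> N)"
proof -
  have bil: "bilinear \<mu>" and skew: "\<And>x y. \<mu> x y = - \<mu> y x"
    and jac: "\<And>x y z. jacobiator \<mu> x y z = 0"
    using \<mu> unfolding lie_bracket_iff_jacobiator by blast+
  have "br_m \<mu> N x y = - br_m \<mu> N y x" for x y
    unfolding br_m_def using N by (subst (1 2 3) skew) (simp add: linear_simps)
  moreover have "jacobiator (br_m \<mu> N) x y z = 0" for x y z
    using N by (simp add: jacobiator_br_m[OF bil N nij] jac linear_simps)
  ultimately show ?thesis
    unfolding lie_bracket_iff_jacobiator using bilinear_br_m[OF bil N] by blast
qed

lemma nijenhuis_br_m:
  assumes "bilinear \<mu>" "linear N" "nijenhuis \<mu> N"
  shows "nijenhuis (br_m \<mu> N) N"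
  unfolding nijenhuis_def br_m_def using assms(1,2)
  by (simp only: bilinear_simps linear_simps nijenhuisD[OF assms(2,3)]) (simp add: algebra_simps)

lemma nijenhuis_concomitant_compose:
  assumes "bilinear \<mu>" "linear N" "linear M" "nijenhuis \<mu> N" "\<And>z. M (N z) = N (M z)"
  shows "nijenhuis_concomitant \<mu> N (\<lambda>z. N (M z)) x y = N (nijenhuis_concomitant \<mu> N M x y)"
  unfolding nijenhuis_concomitant_def br_m_def using assms(1-3)
  by (simp only: bilinear_simps linear_simps nijenhuisD[OF assms(2,4)] assms(5))
    (simp add: algebra_simps)
lemma nijenhuis_concomitant_funpow:
  assumes "bilinear \<mu>" "linear N" "nijenhuis \<mu> N"
  shows "nijenhuis_concomitant \<mu> N (N ^^ k) x y = 0"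
proof (induction k arbitrary: x y)
  case 0
  show ?case by (simp add: nijenhuis_concomitant_def br_m_def algebra_simps)
next
  case (Suc k)
  have "nijenhuis_concomitant \<mu> N (\<lambda>z. N ((N ^^ k) z)) x y = N (nijenhuis_concomitant \<mu> N (N ^^ k) x y)"
    by (rule nijenhuis_concomitant_compose[OF assms(1,2) linear_funpow[OF assms(2)] assms(3)])
      (simp add: funpow_swap1)
  then show ?case
    using Suc.IH linear_0[OF assms(2)] by (simp add: comp_def)
qed

lemma br_m_funpow_Suc:
  assumes "bilinear \<mu>" "linear N" "nijenhuis \<mu> N"
  shows "br_m \<mu> (N ^^ Suc k) = br_m (br_m \<mu> (N ^^ k)) N"
proof (intro ext)
  fix x y
  have "br_m (br_m \<mu> (N ^^ k)) N x y
      = br_m \<mu> (\<lambda>z. (N ^^ k) (N z)) x y + nijenhuis_concomitant \<mu> (N ^^ k) N x y"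
    by (rule br_m_br_m[OF assms(1) linear_funpow[OF assms(2)] assms(2)]) (simp add: funpow_swap1)
  also have "nijenhuis_concomitant \<mu> (N ^^ k) N x y = 0"
    using nijenhuis_concomitant_funpow[OF assms] nijenhuis_concomitant_commute by metis
  finally show "br_m \<mu> (N ^^ Suc k) x y = br_m (br_m \<mu> (N ^^ k)) N x y"
    by (simp add: comp_def funpow_swap1)
qed

lemma nijenhuis_br_m_funpow:
  assumes "bilinear \<mu>" "linear N" "nijenhuis \<mu> N"
  shows "nijenhuis (br_m \<mu> (N ^^ k)) N"
proof (induction k)
  case 0
  show ?case using assms by simp
next
  case (Suc k)
  show ?case
    unfolding br_m_funpow_Suc[OF assms]
    by (rule nijenhuis_br_m[OF bilinear_br_m[OF assms(1) linear_funpow[OF assms(2)]] assms(2) Suc.IH])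
qed

lemma br_m_funpow_add:
  assumes "bilinear \<mu>" "linear N" "nijenhuis \<mu> N"
  shows "br_m (br_m \<mu> (N ^^ i)) (N ^^ k) = br_m \<mu> (N ^^ (i + k))"
proof (induction k)
  case 0
  show ?case by simp
next
  case (Suc k)
  have "br_m (br_m \<mu> (N ^^ i)) (N ^^ Suc k) = br_m (br_m (br_m \<mu> (N ^^ i)) (N ^^ k)) N"
    by (rule br_m_funpow_Suc[OF bilinear_br_m[OF assms(1) linear_funpow[OF assms(2)]]
          assms(2) nijenhuis_br_m_funpow[OF assms]])
  also have "\<dots> = br_m \<mu> (N ^^ Suc (i + k))"
    by (simp only: Suc.IH br_m_funpow_Suc[OF assms])
  finally show ?case by (simp only: add_Suc_right)
qed

text \<open>The concomitant of \<open>N ^^ k\<close> with itself is the difference of two expressions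
  for \<open>br_m \<mu> (N ^^ (i + k + k))\<close>.\<close>
lemma nijenhuis_funpow_br_m_funpow:
  assumes "bilinear \<mu>" "linear N" "nijenhuis \<mu> N"
  shows "nijenhuis (br_m \<mu> (N ^^ i)) (N ^^ k)"
  unfolding nijenhuis_iff_concomitant
proof (intro allI)
  fix x y
  let ?\<nu> = "br_m \<mu> (N ^^ i)"
  have "br_m (br_m ?\<nu> (N ^^ k)) (N ^^ k) x y
      = br_m ?\<nu> (\<lambda>z. (N ^^ k) ((N ^^ k) z)) x y + nijenhuis_concomitant ?\<nu> (N ^^ k) (N ^^ k) x y"
    by (rule br_m_br_m) (simp_all add: bilinear_br_m linear_funpow assms(1,2))
  moreover have "(\<lambda>z. (N ^^ k) ((N ^^ k) z)) = N ^^ (k + k)"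
    by (simp add: funpow_add fun_eq_iff)
  ultimately show "nijenhuis_concomitant ?\<nu> (N ^^ k) (N ^^ k) x y = 0"
    by (simp add: br_m_funpow_add[OF assms] add.assoc)
qed

lemma br_m_affine_comb:
  assumes "bilinear \<mu>" "linear M"
  shows "br_m \<mu> (\<lambda>z. a *\<^sub>R z + b *\<^sub>R M z) x y = a *\<^sub>R \<mu> x y + b *\<^sub>R br_m \<mu> M x y"
  using assms by (simp add: br_m_def bilinear_simps linear_simps algebra_simps)

lemma nijenhuis_affine_comb:
  assumes "bilinear \<mu>" "linear M" "nijenhuis \<mu> M"
  shows "nijenhuis \<mu> (\<lambda>z. a *\<^sub>R z + b *\<^sub>R M z)"
  unfolding nijenhuis_def br_m_def using assms(1,2)
  by (simp only: bilinear_simps linear_simps nijenhuisD[OF assms(2,3)]) (simp add: algebra_simps)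

lemma lie_bracket_br_m_funpow_comb:
  assumes \<mu>: "lie_bracket \<mu>" and N: "linear N" and nij: "nijenhuis \<mu> N"
  shows "lie_bracket (\<lambda>x y. a *\<^sub>R br_m \<mu> (N ^^ i) x y + b *\<^sub>R br_m \<mu> (N ^^ k) x y)"
proof -
  have bil: "bilinear \<mu>"
    using \<mu> unfolding lie_bracket_def by blast
  have comb: "lie_bracket (\<lambda>x y. a *\<^sub>R br_m \<mu> (N ^^ i) x y + b *\<^sub>R br_m \<mu> (N ^^ k) x y)"
    if "i \<le> k" for a b i k
  proof -
    obtain m where k: "k = i + m"
      using \<open>i \<le> k\<close> le_Suc_ex by blast
    let ?\<nu> = "br_m \<mu> (N ^^ i)"
    have lie: "lie_bracket ?\<nu>"
      using lie_bracket_br_m[OF \<mu> linear_funpow[OF N]] nijenhuis_funpow_br_m_funpow[OF bil N nij, of 0 i]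
      by simp
    have "lie_bracket (br_m ?\<nu> (\<lambda>z. a *\<^sub>R z + b *\<^sub>R (N ^^ m) z))"
    proof (rule lie_bracket_br_m[OF lie])
      show "linear (\<lambda>z. a *\<^sub>R z + b *\<^sub>R (N ^^ m) z)"
        by (rule linearI) (simp_all add: linear_simps[OF linear_funpow[OF N]] algebra_simps)
      show "nijenhuis ?\<nu> (\<lambda>z. a *\<^sub>R z + b *\<^sub>R (N ^^ m) z)"
        by (rule nijenhuis_affine_comb) (simp_all add: bilinear_br_m bil linear_funpow N
            nijenhuis_funpow_br_m_funpow[OF bil N nij])
    qed
    moreover have "br_m ?\<nu> (\<lambda>z. a *\<^sub>R z + b *\<^sub>R (N ^^ m) z)
        = (\<lambda>x y. a *\<^sub>R br_m \<mu> (N ^^ i) x y + b *\<^sub>R br_m \<mu> (N ^^ k) x y)"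
      using br_m_affine_comb[OF bilinear_br_m[OF bil linear_funpow[OF N]] linear_funpow[OF N]]
      by (simp add: fun_eq_iff br_m_funpow_add[OF bil N nij] k)
    ultimately show ?thesis
      by simp
  qed
  show ?thesis
  proof (cases "i \<le> k")
    case True
    then show ?thesis by (rule comb)
  next
    case False
    then show ?thesis
      using comb[of k i b a] by (simp add: add.commute)
  qed
qed

lemma lie_bracket_br_m_funpow:
  assumes "lie_bracket \<mu>" "linear N" "nijenhuis \<mu> N"
  shows "lie_bracket (br_m \<mu> (N ^^ i))"
  using lie_bracket_br_m_funpow_comb[OF assms, of 1 i 0 i] by simp

section \<open>Duality\<close>

lemma inner_coad:
  fixes \<mu> :: "'a::euclidean_space \<Rightarrow> 'a \<Rightarrow> 'a"
  assumes "bilinear \<mu>"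
  shows "coad \<mu> x e \<bullet> z = - (e \<bullet> \<mu> x z)"
  using assms unfolding coad_def bilinear_def by (simp add: adjoint_clauses)

lemma adjoint_funpow:
  fixes n :: "'a::euclidean_space \<Rightarrow> 'a"
  assumes n: "linear n"
  shows "adjoint (n ^^ j) = adjoint n ^^ j"
proof (rule adjoint_unique, intro allI)
  show "(n ^^ j) x \<bullet> y = x \<bullet> (adjoint n ^^ j) y" for x y
  proof (induction j arbitrary: y)
    case 0
    show ?case by simp
  next
    case (Suc j)
    have "(n ^^ Suc j) x \<bullet> y = (n ^^ j) x \<bullet> adjoint n y"
      by (simp add: adjoint_clauses(1)[OF n])
    also have "\<dots> = x \<bullet> (adjoint n ^^ Suc j) y"
      by (simp add: Suc.IH funpow_swap1)
    finally show ?case .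
  qed
qed

lemma A_op_adjoint:
  fixes \<mu> :: "'a::euclidean_space \<Rightarrow> 'a \<Rightarrow> 'a"
  assumes \<mu>: "bilinear \<mu>" and m: "linear m"
  shows "A_op \<mu> m (adjoint m) \<xi> = coad (br_m \<mu> m) \<xi>"
proof (rule ext, rule vector_eq_rdot[THEN iffD1], rule allI)
  fix \<eta> z
  show "A_op \<mu> m (adjoint m) \<xi> \<eta> \<bullet> z = coad (br_m \<mu> m) \<xi> \<eta> \<bullet> z"
    unfolding A_op_def
    by (simp only: inner_diff_left inner_add_left adjoint_clauses(2)[OF m] inner_coad[OF \<mu>]
        inner_coad[OF bilinear_br_m[OF \<mu> m]] br_m_def inner_diff_right inner_add_right)
qed

lemma cocycle_m_adjoint_iff:
  fixes \<mu> :: "'a::euclidean_space \<Rightarrow> 'a \<Rightarrow> 'a"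
  assumes "bilinear \<mu>" "linear m"
  shows "cocycle_m \<mu> m (adjoint m) D \<longleftrightarrow> cocycle (br_m \<mu> m) D"
  unfolding cocycle_m_def cocycle_def A_op_adjoint[OF assms] ..

lemma coad_br_m:
  fixes \<mu> :: "'a::euclidean_space \<Rightarrow> 'a \<Rightarrow> 'a"
  assumes "bilinear \<mu>" "linear m"
  shows "coad (br_m \<mu> m) x e = coad \<mu> (m x) e + adjoint m (coad \<mu> x e) - coad \<mu> x (adjoint m e)"
  using fun_cong[OF A_op_adjoint[OF assms, of x], of e] unfolding A_op_def by (simp add: algebra_simps)

text \<open>The transpose of the Nijenhuis identity, written with coadjoint actions.\<close>
lemma adjoint_coad_commutator_br_m:
  fixes \<mu> :: "'a::euclidean_space \<Rightarrow> 'a \<Rightarrow> 'a"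
  assumes \<mu>: "bilinear \<mu>" and N: "linear N" and nij: "nijenhuis \<mu> N"
  shows "adjoint N (coad (br_m \<mu> N) x e) - coad (br_m \<mu> N) x (adjoint N e)
       = adjoint N (adjoint N (coad \<mu> x e) - coad \<mu> x (adjoint N e))"
proof (rule vector_eq_rdot[THEN iffD1], rule allI)
  fix z
  have r: "\<mu> (N x) (N z) = N (\<mu> (N x) z) + N (\<mu> x (N z)) - N (N (\<mu> x z))"
    by (rule nijenhuisD[OF N nij])
  show "(adjoint N (coad (br_m \<mu> N) x e) - coad (br_m \<mu> N) x (adjoint N e)) \<bullet> z
      = adjoint N (adjoint N (coad \<mu> x e) - coad \<mu> x (adjoint N e)) \<bullet> z"
    apply (simp only: inner_diff_left adjoint_clauses(2)[OF N] inner_coad[OF \<mu>]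
        inner_coad[OF bilinear_br_m[OF \<mu> N]])
    apply (simp only: br_m_def r)
    by (simp add: inner_diff_right inner_add_right adjoint_clauses(2)[OF N] linear_simps[OF N]
        algebra_simps)
qed

lemma inner_dual_br:
  fixes d :: "'a::euclidean_space \<Rightarrow> 'a \<Rightarrow> 'a \<Rightarrow> real"
  assumes d: "linear (\<lambda>\<xi>. d \<xi> e1 e2)"
  shows "dual_br d e1 e2 \<bullet> \<xi> = d \<xi> e1 e2"
proof -
  have "d \<xi> e1 e2 = (\<lambda>\<xi>. d \<xi> e1 e2) (\<Sum>b\<in>Basis. (\<xi> \<bullet> b) *\<^sub>R b)"
    by (simp add: euclidean_representation)
  also have "\<dots> = (\<Sum>b\<in>Basis. (\<xi> \<bullet> b) * d b e1 e2)"
    by (simp add: linear_sum[OF d] linear_scale[OF d])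
  also have "\<dots> = dual_br d e1 e2 \<bullet> \<xi>"
    unfolding dual_br_def inner_sum_left by (rule sum.cong) (simp_all add: inner_commute)
  finally show ?thesis ..
qed

lemma lie_bracket_comp_centroid:
  assumes L: "lie_bracket L" and S: "linear S"
    and right: "\<And>a b. L a (S b) = S (L a b)" and left: "\<And>a b. L (S a) b = S (L a b)"
  shows "lie_bracket (\<lambda>a b. S (L a b))"
proof -
  have bil: "bilinear L" and skew: "\<And>x y. L x y = - L y x"
    and jac: "\<And>x y z. jacobiator L x y z = 0"
    using L unfolding lie_bracket_iff_jacobiator by blast+
  have "bilinear (\<lambda>a b. S (L a b))"
    using bil S unfolding bilinear_def by (auto intro!: linearI simp: bilinear_simps[OF bil] linear_simps[OF S])
  moreover have "S (L x y) = - S (L y x)" for x y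
    by (subst skew) (simp add: linear_simps[OF S])
  moreover have "jacobiator (\<lambda>a b. S (L a b)) x y z = 0" for x y z
  proof -
    have "jacobiator (\<lambda>a b. S (L a b)) x y z = S (S (jacobiator L x y z))"
      unfolding jacobiator_def by (simp only: right linear_simps[OF S])
    then show ?thesis
      by (simp add: jac linear_simps[OF S])
  qed
  ultimately show ?thesis
    unfolding lie_bracket_iff_jacobiator by blast
qed

definition cocycle_defect ::
    "('a::real_inner \<Rightarrow> 'a \<Rightarrow> 'a) \<Rightarrow> ('a \<Rightarrow> 'a \<Rightarrow> 'a \<Rightarrow> real) \<Rightarrow> 'a \<Rightarrow> 'a \<Rightarrow> 'a \<Rightarrow> 'a \<Rightarrow> real" where
  "cocycle_defect \<mu> D x y e1 e2 =
     iota (coad \<mu> x) (D y) e1 e2 - iota (coad \<mu> y) (D x) e1 e2 - D (\<mu> x y) e1 e2"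

definition coad_commutator_term ::
    "('a::real_inner \<Rightarrow> 'a \<Rightarrow> 'a) \<Rightarrow> ('a \<Rightarrow> 'a \<Rightarrow> 'a \<Rightarrow> real) \<Rightarrow> ('a \<Rightarrow> 'a) \<Rightarrow> 'a \<Rightarrow> 'a \<Rightarrow> 'a \<Rightarrow> 'a \<Rightarrow> real" where
  "coad_commutator_term \<mu> D T x y e1 e2 =
     D y e1 (T (coad \<mu> x e2) - coad \<mu> x (T e2)) - D x e1 (T (coad \<mu> y e2) - coad \<mu> y (T e2))"

lemma cocycle_iff_defect: "cocycle \<mu> D \<longleftrightarrow> (\<forall>x y e1 e2. cocycle_defect \<mu> D x y e1 e2 = 0)"
  unfolding cocycle_def cocycle_defect_def ..

section \<open>Cochains equivariant under a transpose\<close>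

locale transpose_equivariant =
  fixes D :: "'a::euclidean_space \<Rightarrow> 'a \<Rightarrow> 'a \<Rightarrow> real" and M :: "'a \<Rightarrow> 'a"
  assumes wedge2_cochain: "\<And>\<xi>. wedge2 (D \<xi>)"
    and linear_cochain: "\<And>e1 e2. linear (\<lambda>\<xi>. D \<xi> e1 e2)"
    and linear_map: "linear M"
    and equivariant: "\<And>\<xi> e1 e2. D \<xi> e1 (adjoint M e2) = D (M \<xi>) e1 e2"
begin

lemma bilinear_cochain: "bilinear (D \<xi>)"
  using wedge2_cochain unfolding wedge2_def by blast

lemma skew_cochain: "D \<xi> e1 e2 = - D \<xi> e2 e1"
  using wedge2_cochain unfolding wedge2_def by blast

lemmas cochain_simps = bilinear_simps[OF bilinear_cochain]

lemma cochain_add_diff: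
  "D (a + b) e1 e2 = D a e1 e2 + D b e1 e2" "D (a - b) e1 e2 = D a e1 e2 - D b e1 e2"
  by (simp_all add: linear_simps[OF linear_cochain[of e1 e2], simplified])

lemma cochain_comp: "D (M \<xi>) e1 e2 = D \<xi> e1 (adjoint M e2)"
  by (rule equivariant[symmetric])

lemma adjoint_left: "D \<xi> (adjoint M e1) e2 = D \<xi> e1 (adjoint M e2)"
  by (metis skew_cochain equivariant)

lemma funpow: "transpose_equivariant D (M ^^ j)"
proof (rule transpose_equivariant.intro)
  show "D \<xi> e1 (adjoint (M ^^ j) e2) = D ((M ^^ j) \<xi>) e1 e2" for \<xi> e1 e2
    unfolding adjoint_funpow[OF linear_map]
  proof (induction j arbitrary: \<xi>)
    case 0
    show ?case by simp
  next
    case (Suc j)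
    have "D \<xi> e1 ((adjoint M ^^ Suc j) e2) = D (M \<xi>) e1 ((adjoint M ^^ j) e2)"
      by (simp add: equivariant)
    also have "\<dots> = D ((M ^^ Suc j) \<xi>) e1 e2"
      by (simp add: Suc.IH funpow_swap1)
    finally show ?case .
  qed
qed (simp_all add: wedge2_cochain linear_cochain linear_funpow[OF linear_map])

lemma cocycle_defect_comp_br_m:
  assumes "bilinear \<mu>"
  shows "cocycle_defect \<mu> (\<lambda>\<xi>. D (M \<xi>)) x y e1 e2 - cocycle_defect (br_m \<mu> M) D x y e1 e2
     = cocycle_defect \<mu> D x y e1 (adjoint M e2) + cocycle_defect \<mu> D x y (adjoint M e1) e2
       - cocycle_defect \<mu> D (M x) y e1 e2 - cocycle_defect \<mu> D x (M y) e1 e2"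
  unfolding cocycle_defect_def iota_def
  by (simp only: coad_br_m[OF assms linear_map] br_m_def cochain_add_diff cochain_simps
      cochain_comp adjoint_left)

lemma cocycle_defect_comp:
  "cocycle_defect \<mu> (\<lambda>\<xi>. D (M \<xi>)) x y e1 e2
     = cocycle_defect \<mu> D x y e1 (adjoint M e2) + coad_commutator_term \<mu> D (adjoint M) x y e1 e2"
  unfolding cocycle_defect_def iota_def coad_commutator_term_def
  by (simp only: cochain_simps cochain_comp adjoint_left)

lemma coad_commutator_term_br_m:
  assumes "bilinear \<mu>" "nijenhuis \<mu> M"
  shows "coad_commutator_term (br_m \<mu> M) D (adjoint M) x y e1 e2
       = coad_commutator_term \<mu> D (adjoint M) x y (adjoint M e1) e2"
  unfolding coad_commutator_term_def adjoint_coad_commutator_br_m[OF assms(1) linear_map assms(2)]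
  by (simp only: adjoint_left)

lemma cocycle_comp:
  assumes "bilinear \<mu>" "cocycle \<mu> D" "cocycle (br_m \<mu> M) D"
  shows "cocycle \<mu> (\<lambda>\<xi>. D (M \<xi>))"
  using assms(2,3) cocycle_defect_comp_br_m[OF assms(1)] unfolding cocycle_iff_defect by simp

text \<open>The two cocycle conditions force the commutator term to vanish, and by
  \<open>coad_commutator_term_br_m\<close> it still vanishes for \<open>\<mu>\<^sub>M\<close>.\<close>
lemma cocycle_br_m_br_m:
  assumes \<mu>: "bilinear \<mu>" and nij: "nijenhuis \<mu> M"
    and c0: "cocycle \<mu> D" and c1: "cocycle (br_m \<mu> M) D"
  shows "cocycle (br_m (br_m \<mu> M) M) D"
proof -
  let ?\<nu> = "br_m \<mu> M"
  have \<nu>: "bilinear ?\<nu>"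
    by (rule bilinear_br_m[OF \<mu> linear_map])
  have z0: "cocycle_defect \<mu> D x y e1 e2 = 0" and z1: "cocycle_defect ?\<nu> D x y e1 e2 = 0"
    for x y e1 e2
    using c0 c1 unfolding cocycle_iff_defect by blast+
  have "coad_commutator_term \<mu> D (adjoint M) x y e1 e2 = 0" for x y e1 e2
    using cocycle_defect_comp_br_m[OF \<mu>, of x y e1 e2] cocycle_defect_comp[of \<mu> x y e1 e2] z0 z1
    by simp
  then have "coad_commutator_term ?\<nu> D (adjoint M) x y e1 e2 = 0" for x y e1 e2
    by (simp add: coad_commutator_term_br_m[OF \<mu> nij])
  then have "cocycle_defect ?\<nu> (\<lambda>\<xi>. D (M \<xi>)) x y e1 e2 = 0" for x y e1 e2
    by (simp add: cocycle_defect_comp z1)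
  then show ?thesis
    using cocycle_defect_comp_br_m[OF \<nu>] z1 unfolding cocycle_iff_defect by simp
qed

lemma cocycle_br_m_funpow:
  assumes \<mu>: "bilinear \<mu>" and nij: "nijenhuis \<mu> M"
    and "cocycle \<mu> D" "cocycle (br_m \<mu> M) D"
  shows "cocycle (br_m \<mu> (M ^^ k)) D"
proof -
  have "cocycle (br_m \<mu> (M ^^ k)) D \<and> cocycle (br_m \<mu> (M ^^ Suc k)) D"
  proof (induction k)
    case 0
    show ?case using assms(3,4) by simp
  next
    case (Suc k)
    let ?\<nu> = "br_m \<mu> (M ^^ k)"
    have "cocycle ?\<nu> D" "cocycle (br_m ?\<nu> M) D"
      using Suc.IH unfolding br_m_funpow_Suc[OF \<mu> linear_map nij] by auto
    then have "cocycle (br_m (br_m ?\<nu> M) M) D"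
      by (rule cocycle_br_m_br_m[OF bilinear_br_m[OF \<mu> linear_funpow[OF linear_map]]
            nijenhuis_br_m_funpow[OF \<mu> linear_map nij]])
    then show ?case
      using Suc.IH unfolding br_m_funpow_Suc[OF \<mu> linear_map nij] by simp
  qed
  then show ?thesis ..
qed

lemma cocycle_br_m_funpow_comp:
  assumes \<mu>: "bilinear \<mu>" and nij: "nijenhuis \<mu> M"
    and "cocycle \<mu> D" "cocycle (br_m \<mu> M) D"
  shows "cocycle (br_m \<mu> (M ^^ i)) (\<lambda>\<xi>. D ((M ^^ j) \<xi>))"
proof -
  interpret power: transpose_equivariant D "M ^^ j"
    by (rule funpow)
  show ?thesis
    by (rule power.cocycle_comp)
      (simp_all add: bilinear_br_m \<mu> linear_funpow linear_map br_m_funpow_add[OF \<mu> linear_map nij]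
        cocycle_br_m_funpow[OF assms])
qed

lemma dual_br_adjoint_right: "dual_br D a (adjoint M b) = adjoint M (dual_br D a b)"
proof (rule vector_eq_rdot[THEN iffD1], rule allI)
  fix z
  show "dual_br D a (adjoint M b) \<bullet> z = adjoint M (dual_br D a b) \<bullet> z"
    by (simp add: inner_dual_br[OF linear_cochain] adjoint_clauses(2)[OF linear_map] equivariant)
qed

lemma dual_br_adjoint_left: "dual_br D (adjoint M a) b = adjoint M (dual_br D a b)"
proof (rule vector_eq_rdot[THEN iffD1], rule allI)
  fix z
  show "dual_br D (adjoint M a) b \<bullet> z = adjoint M (dual_br D a b) \<bullet> z"
    by (simp add: inner_dual_br[OF linear_cochain] adjoint_clauses(2)[OF linear_map] equivariant
        adjoint_left)
qed

lemma br_m_dual_br: "br_m (dual_br D) (adjoint M) a b = adjoint M (dual_br D a b)"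
  by (simp add: br_m_def dual_br_adjoint_left dual_br_adjoint_right)

lemma dual_br_comp: "dual_br (\<lambda>\<xi>. D (M \<xi>)) a b = adjoint M (dual_br D a b)"
proof (rule vector_eq_rdot[THEN iffD1], rule allI)
  have "linear (\<lambda>\<xi>. D (M \<xi>) e1 e2)" for e1 e2
    using linear_compose[OF linear_map linear_cochain] by (simp add: comp_def)
  then show "dual_br (\<lambda>\<xi>. D (M \<xi>)) a b \<bullet> z = adjoint M (dual_br D a b) \<bullet> z" for z
    by (simp add: inner_dual_br linear_cochain adjoint_clauses(2)[OF linear_map])
qed

text \<open>Both terms of \<open>iota (adjoint M) (D \<xi>)\<close> equal \<open>D (M \<xi>)\<close>.\<close>
lemma delta_tw_eq: "delta_tw D (adjoint M) M = (\<lambda>\<xi>. D (M \<xi>))"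
  by (simp add: fun_eq_iff delta_tw_def iota_def adjoint_left equivariant)

lemma inner_br_m_dual_br: "br_m (dual_br D) (adjoint M) a b \<bullet> \<xi> = delta_tw D (adjoint M) M \<xi> a b"
  by (simp add: br_m_dual_br delta_tw_eq adjoint_clauses(2)[OF linear_map]
      inner_dual_br[OF linear_cochain])

lemma lie_bracket_br_m_dual_br:
  assumes "lie_bracket (dual_br D)"
  shows "lie_bracket (br_m (dual_br D) (adjoint M))"
  unfolding br_m_dual_br[abs_def]
  by (rule lie_bracket_comp_centroid[OF assms adjoint_linear[OF linear_map]])
    (simp_all add: dual_br_adjoint_left dual_br_adjoint_right)

lemma lie_bialgebra_comp:
  assumes "lie_bracket \<mu>" "cocycle \<mu> (\<lambda>\<xi>. D (M \<xi>))" "lie_bracket (dual_br D)"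
  shows "lie_bialgebra \<mu> (delta_tw D (adjoint M) M)"
  unfolding lie_bialgebra_def delta_tw_eq
proof (intro conjI allI)
  show "linear (\<lambda>\<xi>. D (M \<xi>) e1 e2)" for e1 e2
    using linear_compose[OF linear_map linear_cochain] by (simp add: comp_def)
  show "lie_bracket (dual_br (\<lambda>\<xi>. D (M \<xi>)))"
    using lie_bracket_br_m_dual_br[OF assms(3)]
    by (simp add: dual_br_comp[abs_def] br_m_dual_br[abs_def])
qed (simp_all add: assms(1,2) wedge2_cochain)

lemma lie_bracket_br_m_dual_br_funpow_comb:
  assumes L: "lie_bracket (dual_br D)"
  shows "lie_bracket (\<lambda>x y. a *\<^sub>R br_m (dual_br D) (adjoint M ^^ j) x y
                          + b *\<^sub>R br_m (dual_br D) (adjoint M ^^ k) x y)"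
proof -
  have power: "transpose_equivariant D (M ^^ i)" for i
    by (rule funpow)
  note adj = adjoint_funpow[OF linear_map]
  have right: "dual_br D x ((adjoint M ^^ i) y) = (adjoint M ^^ i) (dual_br D x y)"
    and left: "dual_br D ((adjoint M ^^ i) x) y = (adjoint M ^^ i) (dual_br D x y)"
    and br: "br_m (dual_br D) (adjoint M ^^ i) x y = (adjoint M ^^ i) (dual_br D x y)" for i x y
    using transpose_equivariant.dual_br_adjoint_right[OF power]
      transpose_equivariant.dual_br_adjoint_left[OF power]
      transpose_equivariant.br_m_dual_br[OF power]
    by (simp_all only: adj)
  let ?S = "\<lambda>z. a *\<^sub>R (adjoint M ^^ j) z + b *\<^sub>R (adjoint M ^^ k) z"
  have S: "linear ?S"
    using linear_funpow[OF adjoint_linear[OF linear_map]]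
    by (intro linearI) (simp_all add: linear_simps algebra_simps)
  have bil: "bilinear (dual_br D)"
    using L unfolding lie_bracket_def by blast
  have "lie_bracket (\<lambda>x y. ?S (dual_br D x y))"
    by (rule lie_bracket_comp_centroid[OF L S]) (simp_all add: right left bilinear_simps[OF bil])
  then show ?thesis
    by (simp add: br)
qed

end


theorem mainTheorem13:
  fixes B :: "'a::euclidean_space \<Rightarrow> 'a \<Rightarrow> 'a"
    and d :: "'a \<Rightarrow> 'a \<Rightarrow> 'a \<Rightarrow> real"
    and n :: "'a \<Rightarrow> 'a"
  assumes NL: "almost_NL_bialgebra B d n"
    and Nij: "nijenhuis B n"
    and equiv: "\<And>xi eta1 eta2. d xi eta1 (adjoint n eta2) = d (n xi) eta1 eta2"
  shows "(\<forall>i j::nat.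
      lie_bracket (br_m B (n ^^ i))
    \<and> lie_bracket (br_m (dual_br d) (adjoint n ^^ j))
    \<and> (\<forall>eta1 eta2 xi. br_m (dual_br d) (adjoint n ^^ j) eta1 eta2 \<bullet> xi
                        = delta_tw d (adjoint n ^^ j) (n ^^ j) xi eta1 eta2)
    \<and> cocycle_m B (n ^^ i) (adjoint n ^^ i) (delta_tw d (adjoint n ^^ j) (n ^^ j))
    \<and> lie_bialgebra (br_m B (n ^^ i)) (delta_tw d (adjoint n ^^ j) (n ^^ j)))
    \<and> (\<forall>i k::nat. \<forall>a b::real.
      lie_bracket (\<lambda>x y. a *\<^sub>R br_m B (n ^^ i) x y + b *\<^sub>R br_m B (n ^^ k) x y))
    \<and> (\<forall>j k::nat. \<forall>a b::real.
      lie_bracket (\<lambda>x y. a *\<^sub>R br_m (dual_br d) (adjoint n ^^ j) x y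
                        + b *\<^sub>R br_m (dual_br d) (adjoint n ^^ k) x y))"
proof -
  have B: "lie_bracket B" and L: "lie_bracket (dual_br d)" and cB: "cocycle B d"
    and n: "linear n" and cBn: "cocycle_m B n (adjoint n) d"
    and d: "\<And>\<xi>. wedge2 (d \<xi>)" "\<And>e1 e2. linear (\<lambda>\<xi>. d \<xi> e1 e2)"
    using NL unfolding almost_NL_bialgebra_def lie_bialgebra_def by blast+
  interpret transpose_equivariant d n
    using d n equiv by (rule transpose_equivariant.intro)
  have B_bil: "bilinear B"
    using B unfolding lie_bracket_def by blast
  have cocycle_ij: "cocycle (br_m B (n ^^ i)) (\<lambda>\<xi>. d ((n ^^ j) \<xi>))" for i j
    using cBn by (intro cocycle_br_m_funpow_comp B_bil Nij cB) (simp add: cocycle_m_adjoint_iff B_bil n)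
  note adj = adjoint_funpow[OF n]
  show ?thesis
  proof (intro conjI allI)
    fix i j :: nat
    interpret power: transpose_equivariant d "n ^^ j"
      by (rule funpow)
    show "lie_bracket (br_m B (n ^^ i))"
      by (rule lie_bracket_br_m_funpow[OF B n Nij])
    show "lie_bracket (br_m (dual_br d) (adjoint n ^^ j))"
      using power.lie_bracket_br_m_dual_br[OF L] by (simp only: adj)
    show "br_m (dual_br d) (adjoint n ^^ j) eta1 eta2 \<bullet> xi
        = delta_tw d (adjoint n ^^ j) (n ^^ j) xi eta1 eta2" for eta1 eta2 xi
      using power.inner_br_m_dual_br by (simp only: adj)
    show "cocycle_m B (n ^^ i) (adjoint n ^^ i) (delta_tw d (adjoint n ^^ j) (n ^^ j))"
      using cocycle_ij power.delta_tw_eq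
      by (simp add: adj[symmetric] cocycle_m_adjoint_iff B_bil linear_funpow n)
    show "lie_bialgebra (br_m B (n ^^ i)) (delta_tw d (adjoint n ^^ j) (n ^^ j))"
      using power.lie_bialgebra_comp[OF lie_bracket_br_m_funpow[OF B n Nij] cocycle_ij L]
      by (simp only: adj)
  qed (rule lie_bracket_br_m_funpow_comb[OF B n Nij], rule lie_bracket_br_m_dual_br_funpow_comb[OF L])
qed

end
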